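(* Let $\alpha>0$, $h>0$, $D_x>0$, $D_y>0$ and $C>0$. Let $x_m\sim\mathrm{Unif}[0,D_x]$ and $y_m\sim\mathrm{Unif}[-D_y/2,D_y/2]$ be independent. Place the pinching antenna at $x_p=x_m$, so that the received SNR is $\gamma_r=\frac{\eta P_t e^{-\alpha x_m}}{\sigma^2(y_m^2+h^2)}$. Let $P_{out}=\Pr(\gamma_r\le\gamma_{\mathrm{thr}})$. Then $P_{out}$ is given by the following case distinction. (i) If $h^2\ge C$: $P_{out}=1$. (ii) If $h^2\le C$, $h^2\ge C-\frac{D_y^2}{4}$ and $h^2\ge Ce^{-\alpha D_x}$: $P_{out}=1+\frac{4}{\alpha D_xD_y}\left(h\tan^{-1}\!\left(\frac{\sqrt{C-h^2}}{h}\right)-\sqrt{C-h^2}\right)$. (iii) If $h^2\le C-\frac{D_y^2}{4}$ and $h^2\ge Ce^{-\alpha D_x}$: $P_{out}=1+\frac{\ln\left(\frac{h^2}{C}+\frac{D_y^2}{4C}\right)-2}{\alpha D_x}+\frac{4h\tan^{-1}\left(\frac{D_y}{2h}\right)}{\alpha D_xD_y}$. (iv) If $h^2\ge C-\frac{D_y^2}{4}$ and $h^2\le Ce^{-\alpha D_x}$: $P_{out}=1+\frac{4}{\alpha D_xD_y}\Big(\sqrt{Ce^{-\alpha D_x}-h^2}-h\tan^{-1}\!\big(\tfrac{\sqrt{Ce^{-\alpha D_x}-h^2}}{h}\big)-\sqrt{C-h^2}+h\tan^{-1}\!\big(\tfrac{\sqrt{C-h^2}}{h}\big)\Big)$. (v)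 If $h^2\le C-\frac{D_y^2}{4}$, $h^2\le Ce^{-\alpha D_x}$ and $h^2\ge Ce^{-\alpha D_x}-\frac{D_y^2}{4}$: $P_{out}=1+\frac{4}{\alpha D_xD_y}\Big(\sqrt{Ce^{-\alpha D_x}-h^2}-h\tan^{-1}\!\big(\tfrac{\sqrt{Ce^{-\alpha D_x}-h^2}}{h}\big)-\frac{D_y}{2}+h\tan^{-1}\!\big(\tfrac{D_y}{2h}\big)\Big)+\frac{\ln\left(\frac{h^2}{C}+\frac{D_y^2}{4C}\right)}{\alpha D_x}$. (vi) If $h^2\le Ce^{-\alpha D_x}-\frac{D_y^2}{4}$: $P_{out}=0$.
   Context: Pinching-antenna system: a dielectric waveguide lies parallel to the $x$-axis at height $h$, fed at $(0,0,h)$, spanning $x\in[0,D_x]$. A single pinching antenna is at $(x_p,0,h)$, $x_p\in[0,D_x]$; a single-antenna user is at $(x_m,y_m,0)$. The waveguide has absorption coefficient $\alpha$ (power attenuates as $e^{-\alpha x_p}$). The received SNR is $\gamma_r=\frac{\eta P_t e^{-\alpha x_p}}{\sigma^2\left((x_m-x_p)^2+y_m^2+h^2\right)}$, where $\eta=\lambda^2/(16\pi^2)>0$, $P_t>0$ is the transmit power, $\sigma^2>0$ the noise variance. $\gamma_{\mathrm{thr}}>0$ is the SNR threshold and $C=\frac{\eta P_t}{\gamma_{\mathrm{thr}}\sigma^2}$. *)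

theory Defs
  imports "HOL-Probability.Probability"
begin

text \<open>Received SNR with the pinching antenna at x_p = x_m (user at (x_m, y_m, 0)).\<close>
definition snr_r :: "real \<Rightarrow> real \<Rightarrow> real \<Rightarrow> real \<Rightarrow> real \<Rightarrow> real \<Rightarrow> real \<Rightarrow> real" where
  "snr_r \<eta> Pt \<sigma>2 \<alpha> h xm ym = \<eta> * Pt * exp (- \<alpha> * xm) / (\<sigma>2 * (ym\<^sup>2 + h\<^sup>2))"

definition user_law :: "real \<Rightarrow> real \<Rightarrow> (real \<times> real) measure" where
  "user_law Dx Dy = uniform_measure lborel {0..Dx} \<Otimes>\<^sub>M uniform_measure lborel {-Dy/2..Dy/2}"

definition P_out :: "real \<Rightarrow> real \<Rightarrow> real \<Rightarrow> real \<Rightarrow> real \<Rightarrow> real \<Rightarrow> real \<Rightarrow> real \<Rightarrow> real" where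
  "P_out \<eta> Pt \<sigma>2 \<gamma>thr \<alpha> h Dx Dy =
     measure (user_law Dx Dy) {(xm, ym). snr_r \<eta> Pt \<sigma>2 \<alpha> h xm ym \<le> \<gamma>thr}"

end

theory Submission
  imports Defs
begin

(* With x_p = x_m, the SNR exceeds the threshold exactly when
   y_m^2 < C exp(-alpha x_m) - h^2.  For fixed x_m the outage probability is therefore
   1 - w(x_m)/a, where a = D_y/2 and w is the square root of the right-hand side clamped to [0, a].
   Along [0, D_x], w equals a until C exp(-alpha x) = a^2 + h^2, then equals
   u = sqrt (C exp(-alpha x) - h^2) until C exp(-alpha x) = h^2, and vanishes afterwards; on the
   middle piece (2/alpha)(h arctan(u/h) - u) is an antiderivative.  The six cases are the possible
   positions of these two breakpoints relative to [0, D_x]. *)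

definition clamped_sqrt :: "real \<Rightarrow> real \<Rightarrow> real" where
  "clamped_sqrt a t = min a (sqrt (max 0 t))"

lemma clamped_sqrt_eq_0: "t \<le> 0 \<Longrightarrow> 0 \<le> a \<Longrightarrow> clamped_sqrt a t = 0"
  by (simp add: clamped_sqrt_def max_def)

lemma clamped_sqrt_eq_sqrt: "0 \<le> a \<Longrightarrow> 0 \<le> t \<Longrightarrow> t \<le> a\<^sup>2 \<Longrightarrow> clamped_sqrt a t = sqrt t"
  by (metis clamped_sqrt_def abs_of_nonneg max.absorb2 min.absorb2 real_sqrt_abs real_sqrt_le_mono)

lemma clamped_sqrt_eq_bound: "0 \<le> a \<Longrightarrow> a\<^sup>2 \<le> t \<Longrightarrow> clamped_sqrt a t = a"
  by (metis clamped_sqrt_def abs_of_nonneg le_max_iff_disj min.absorb1 real_sqrt_abs real_sqrt_le_mono)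

lemma clamped_sqrt_bounds: "0 \<le> a \<Longrightarrow> 0 \<le> clamped_sqrt a t \<and> clamped_sqrt a t \<le> a"
  by (simp add: clamped_sqrt_def)

lemma emeasure_interval_inter_square_ge:
  fixes a t :: real
  assumes "0 \<le> a"
  shows "emeasure lborel ({-a..a} \<inter> {y. t \<le> y\<^sup>2}) = ennreal (2 * a - 2 * clamped_sqrt a t)"
proof (cases "t \<le> a\<^sup>2")
  case True
  define s where "s = clamped_sqrt a t"
  have s: "0 \<le> s" "s \<le> a" using clamped_sqrt_bounds[OF assms] by (simp_all add: s_def)
  have "s = sqrt (max 0 t)"
    using True assms by (cases "t \<le> 0") (simp_all add: s_def clamped_sqrt_eq_0 clamped_sqrt_eq_sqrt)
  then have "t \<le> y\<^sup>2 \<longleftrightarrow> s \<le> \<bar>y\<bar>" for y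
    by (metis max.bounded_iff real_sqrt_abs real_sqrt_le_iff zero_le_power2)
  then have "{-a..a} \<inter> {y. t \<le> y\<^sup>2} = {-a..a} - {-s<..<s}"
    by (auto simp: abs_if)
  moreover have "emeasure lborel ({-a..a} - {-s<..<s}) = ennreal (2 * a - 2 * s)"
    using s by (subst emeasure_Diff) (auto simp: ennreal_minus)
  ultimately show ?thesis by (simp add: s_def)
next
  case False
  have "y\<^sup>2 \<le> a\<^sup>2" if "y \<in> {-a..a}" for y
    using that assms abs_le_square_iff[of y a] by auto
  then have "{-a..a} \<inter> {y. t \<le> y\<^sup>2} = {}"
    using False by force
  then show ?thesis using False assms by (simp add: clamped_sqrt_eq_bound)
qed

lemma emeasure_uniform_interval_square_ge:
  fixes a t :: real
  assumes "0 < a"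
  shows "emeasure (uniform_measure lborel {-a..a}) {y. t \<le> y\<^sup>2} = ennreal (1 - clamped_sqrt a t / a)"
proof -
  have "emeasure (uniform_measure lborel {-a..a}) {y. t \<le> y\<^sup>2}
      = ennreal (2 * a - 2 * clamped_sqrt a t) / ennreal (2 * a)"
    using assms by (simp add: emeasure_interval_inter_square_ge)
  also have "\<dots> = ennreal ((2 * a - 2 * clamped_sqrt a t) / (2 * a))"
    using assms clamped_sqrt_bounds[of a t] by (intro divide_ennreal) auto
  finally show ?thesis using assms by (simp add: diff_divide_distrib)
qed

lemma le_ln_div_iff:
  fixes C K \<alpha> x :: real
  assumes "0 < C" "0 < K" "0 < \<alpha>"
  shows "x \<le> ln (C / K) / \<alpha> \<longleftrightarrow> K \<le> C * exp (- \<alpha> * x)"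
proof -
  have "K \<le> C * exp (- \<alpha> * x) \<longleftrightarrow> ln K \<le> ln C - \<alpha> * x"
    using assms by (subst ln_le_cancel_iff[symmetric]) (auto simp: ln_mult)
  then show ?thesis using assms by (simp add: ln_div le_divide_eq algebra_simps)
qed

lemma ln_div_le_iff:
  fixes C K \<alpha> x :: real
  assumes "0 < C" "0 < K" "0 < \<alpha>"
  shows "ln (C / K) / \<alpha> \<le> x \<longleftrightarrow> C * exp (- \<alpha> * x) \<le> K"
proof -
  have "C * exp (- \<alpha> * x) \<le> K \<longleftrightarrow> ln C - \<alpha> * x \<le> ln K"
    using assms by (subst ln_le_cancel_iff[symmetric]) (auto simp: ln_mult)
  then show ?thesis using assms by (simp add: ln_div divide_le_eq algebra_simps)
qed

lemma has_real_derivative_arctan_primitive: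
  fixes h u :: real
  assumes "h > 0"
  shows "((\<lambda>v. h * arctan (v / h) - v) has_real_derivative - (u\<^sup>2 / (u\<^sup>2 + h\<^sup>2))) (at u)"
proof -
  have "((\<lambda>v. h * arctan (v / h) - v) has_real_derivative h * (inverse (1 + (u / h)\<^sup>2) * (1 / h)) - 1) (at u)"
    by (auto intro!: derivative_eq_intros)
  moreover have "h * (inverse (1 + (u / h)\<^sup>2) * (1 / h)) - 1 = - (u\<^sup>2 / (u\<^sup>2 + h\<^sup>2))"
    using assms by (simp add: field_simps power2_eq_square)
  ultimately show ?thesis by simp
qed

lemma has_real_derivative_sqrt_exp_primitive:
  fixes C h \<alpha> x :: real
  assumes "h > 0" "\<alpha> > 0" "h\<^sup>2 < C * exp (- \<alpha> * x)"
  shows "((\<lambda>y. 2 / \<alpha> * (h * arctan (sqrt (C * exp (- \<alpha> * y) - h\<^sup>2) / h) - sqrt (C * exp (- \<alpha> * y) - h\<^sup>2)))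
           has_real_derivative sqrt (C * exp (- \<alpha> * x) - h\<^sup>2)) (at x)"
proof -
  define u where "u = sqrt (C * exp (- \<alpha> * x) - h\<^sup>2)"
  have u: "u > 0" "C * exp (- \<alpha> * x) = u\<^sup>2 + h\<^sup>2" using assms by (auto simp: u_def)
  have inner: "((\<lambda>y. sqrt (C * exp (- \<alpha> * y) - h\<^sup>2)) has_real_derivative - \<alpha> * (u\<^sup>2 + h\<^sup>2) / (2 * u)) (at x)"
    using assms unfolding u(2)[symmetric] by (auto intro!: derivative_eq_intros simp: u_def field_simps)
  \<comment> \<open>Stated for an abstract B so that the simplifier does not expand u^2 + h^2.\<close>
  have cancel: "- (u\<^sup>2 / B) * (- \<alpha> * B / (2 * u)) = \<alpha> * u / 2" if "B \<noteq> 0" for B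
    using u(1) that by (simp add: field_simps power2_eq_square)
  have "u\<^sup>2 + h\<^sup>2 \<noteq> 0" using u(1) by (simp add: add_pos_pos)
  from DERIV_chain2[OF has_real_derivative_arctan_primitive[OF assms(1)] inner]
  have "((\<lambda>y. h * arctan (sqrt (C * exp (- \<alpha> * y) - h\<^sup>2) / h) - sqrt (C * exp (- \<alpha> * y) - h\<^sup>2))
          has_real_derivative \<alpha> * u / 2) (at x)"
    unfolding cancel[OF \<open>u\<^sup>2 + h\<^sup>2 \<noteq> 0\<close>, symmetric] by (simp add: u_def)
  from DERIV_cmult[OF this, of "2 / \<alpha>"] show ?thesis using assms by (simp add: u_def)
qed

definition coverage_halfwidth :: "real \<Rightarrow> real \<Rightarrow> real \<Rightarrow> real \<Rightarrow> real \<Rightarrow> real" where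
  "coverage_halfwidth \<alpha> h C a x = clamped_sqrt a (C * exp (- \<alpha> * x) - h\<^sup>2)"

(* The arctan term is constant where the half-width is a and vanishes where it is 0; the term
   a * min x x_a integrates the constant piece up to the first breakpoint x_a. *)
definition coverage_primitive :: "real \<Rightarrow> real \<Rightarrow> real \<Rightarrow> real \<Rightarrow> real \<Rightarrow> real" where
  "coverage_primitive \<alpha> h C a x =
     2 / \<alpha> * (h * arctan (coverage_halfwidth \<alpha> h C a x / h) - coverage_halfwidth \<alpha> h C a x)
     + a * min x (ln (C / (a\<^sup>2 + h\<^sup>2)) / \<alpha>)"

context
  fixes \<alpha> h C a :: real
  assumes \<alpha>: "0 < \<alpha>" and h: "0 < h" and C: "0 < C" and a: "0 < a"
begin

lemma coverage_halfwidth_full: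
  "a\<^sup>2 + h\<^sup>2 \<le> C * exp (- \<alpha> * x) \<Longrightarrow> coverage_halfwidth \<alpha> h C a x = a"
  using a by (simp add: coverage_halfwidth_def clamped_sqrt_eq_bound)

lemma coverage_halfwidth_partial:
  "h\<^sup>2 \<le> C * exp (- \<alpha> * x) \<Longrightarrow> C * exp (- \<alpha> * x) \<le> a\<^sup>2 + h\<^sup>2 \<Longrightarrow>
     coverage_halfwidth \<alpha> h C a x = sqrt (C * exp (- \<alpha> * x) - h\<^sup>2)"
  using a by (simp add: coverage_halfwidth_def clamped_sqrt_eq_sqrt)

lemma coverage_halfwidth_none:
  "C * exp (- \<alpha> * x) \<le> h\<^sup>2 \<Longrightarrow> coverage_halfwidth \<alpha> h C a x = 0"
  using a by (simp add: coverage_halfwidth_def clamped_sqrt_eq_0)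

lemma coverage_primitive_full:
  assumes "a\<^sup>2 + h\<^sup>2 \<le> C * exp (- \<alpha> * x)"
  shows "coverage_primitive \<alpha> h C a x = 2 / \<alpha> * (h * arctan (a / h) - a) + a * x"
proof -
  have "x \<le> ln (C / (a\<^sup>2 + h\<^sup>2)) / \<alpha>"
    using assms \<alpha> C a h by (subst le_ln_div_iff) (auto simp: add_pos_pos)
  then show ?thesis using assms by (simp add: coverage_primitive_def coverage_halfwidth_full)
qed

lemma coverage_primitive_partial:
  assumes "h\<^sup>2 \<le> C * exp (- \<alpha> * x)" "C * exp (- \<alpha> * x) \<le> a\<^sup>2 + h\<^sup>2"
  shows "coverage_primitive \<alpha> h C a x =
           2 / \<alpha> * (h * arctan (sqrt (C * exp (- \<alpha> * x) - h\<^sup>2) / h) - sqrt (C * exp (- \<alpha> * x) - h\<^sup>2))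
           + a * ln (C / (a\<^sup>2 + h\<^sup>2)) / \<alpha>"
proof -
  have "ln (C / (a\<^sup>2 + h\<^sup>2)) / \<alpha> \<le> x"
    using assms \<alpha> C a h by (subst ln_div_le_iff) (auto simp: add_pos_pos)
  then show ?thesis using assms by (simp add: coverage_primitive_def coverage_halfwidth_partial)
qed

lemma coverage_primitive_none:
  assumes "C * exp (- \<alpha> * x) \<le> h\<^sup>2"
  shows "coverage_primitive \<alpha> h C a x = a * ln (C / (a\<^sup>2 + h\<^sup>2)) / \<alpha>"
proof -
  have "C * exp (- \<alpha> * x) \<le> a\<^sup>2 + h\<^sup>2" using assms zero_le_power2[of a] by linarith
  then have "ln (C / (a\<^sup>2 + h\<^sup>2)) / \<alpha> \<le> x"
    using \<alpha> C a h by (subst ln_div_le_iff) (auto simp: add_pos_pos)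
  then show ?thesis using assms by (simp add: coverage_primitive_def coverage_halfwidth_none)
qed

lemma has_real_derivative_coverage_primitive:
  assumes "x \<noteq> ln (C / (a\<^sup>2 + h\<^sup>2)) / \<alpha>" "x \<noteq> ln (C / h\<^sup>2) / \<alpha>"
  shows "(coverage_primitive \<alpha> h C a has_real_derivative coverage_halfwidth \<alpha> h C a x) (at x)"
proof -
  define xa where "xa = ln (C / (a\<^sup>2 + h\<^sup>2)) / \<alpha>"
  define x0 where "x0 = ln (C / h\<^sup>2) / \<alpha>"
  have ah: "0 < a\<^sup>2 + h\<^sup>2" "0 < h\<^sup>2" using a h by (simp_all add: add_pos_pos)
  have full: "a\<^sup>2 + h\<^sup>2 \<le> C * exp (- \<alpha> * y)" if "y < xa" for y
    using that le_ln_div_iff[OF C ah(1) \<alpha>, of y] unfolding xa_def by linarith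
  have below_full: "C * exp (- \<alpha> * y) \<le> a\<^sup>2 + h\<^sup>2" if "xa < y" for y
    using that ln_div_le_iff[OF C ah(1) \<alpha>, of y] unfolding xa_def by linarith
  have above_none: "h\<^sup>2 < C * exp (- \<alpha> * y)" if "y < x0" for y
    using that ln_div_le_iff[OF C ah(2) \<alpha>, of y] unfolding x0_def by linarith
  have none: "C * exp (- \<alpha> * y) \<le> h\<^sup>2" if "x0 < y" for y
    using that ln_div_le_iff[OF C ah(2) \<alpha>, of y] unfolding x0_def by linarith
  consider "x < xa" | "xa < x" "x < x0" | "x0 < x"
    using assms xa_def x0_def by fastforce
  then show ?thesis
  proof cases
    case 1
    have "((\<lambda>y. 2 / \<alpha> * (h * arctan (a / h) - a) + a * y) has_real_derivative a) (at x)"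
      by (auto intro!: derivative_eq_intros)
    then show ?thesis unfolding coverage_halfwidth_full[OF full[OF 1]]
      by (rule has_field_derivative_transform_within_open[where S = "{..<xa}"])
         (use 1 full in \<open>auto simp: coverage_primitive_full\<close>)
  next
    case 2
    have "((\<lambda>y. 2 / \<alpha> * (h * arctan (sqrt (C * exp (- \<alpha> * y) - h\<^sup>2) / h) - sqrt (C * exp (- \<alpha> * y) - h\<^sup>2))
             + a * ln (C / (a\<^sup>2 + h\<^sup>2)) / \<alpha>) has_real_derivative sqrt (C * exp (- \<alpha> * x) - h\<^sup>2) + 0) (at x)"
      by (intro DERIV_add has_real_derivative_sqrt_exp_primitive DERIV_const h \<alpha> above_none 2)
    then show ?thesis
      unfolding add_0_right coverage_halfwidth_partial[OF less_imp_le[OF above_none[OF 2(2)]] below_full[OF 2(1)]]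
      by (rule has_field_derivative_transform_within_open[where S = "{xa<..<x0}"])
         (use 2 below_full above_none in \<open>auto simp: coverage_primitive_partial less_imp_le\<close>)
  next
    case 3
    have "((\<lambda>y. a * ln (C / (a\<^sup>2 + h\<^sup>2)) / \<alpha>) has_real_derivative 0) (at x)"
      by (auto intro!: derivative_eq_intros)
    then show ?thesis unfolding coverage_halfwidth_none[OF none[OF 3]]
      by (rule has_field_derivative_transform_within_open[where S = "{x0<..}"])
         (use 3 none in \<open>auto simp: coverage_primitive_none\<close>)
  qed
qed

lemma has_integral_coverage_halfwidth:
  assumes "0 \<le> D"
  shows "(coverage_halfwidth \<alpha> h C a has_integral
           coverage_primitive \<alpha> h C a D - coverage_primitive \<alpha> h C a 0) {0..D}"
proof (rule fundamental_theorem_of_calculus_strong[where S = "{ln (C / (a\<^sup>2 + h\<^sup>2)) / \<alpha>, ln (C / h\<^sup>2) / \<alpha>}"])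
  show "continuous_on {0..D} (coverage_primitive \<alpha> h C a)"
    unfolding coverage_primitive_def coverage_halfwidth_def clamped_sqrt_def
    using h by (intro continuous_intros) auto
  fix x assume "x \<in> {0..D} - {ln (C / (a\<^sup>2 + h\<^sup>2)) / \<alpha>, ln (C / h\<^sup>2) / \<alpha>}"
  then show "(coverage_primitive \<alpha> h C a has_vector_derivative coverage_halfwidth \<alpha> h C a x) (at x)"
    using has_real_derivative_coverage_primitive by (simp add: has_real_derivative_iff_has_vector_derivative)
qed (use assms in auto)

end

lemma snr_r_le_iff:
  assumes "\<sigma>2 > 0" "\<gamma>thr > 0" "h \<noteq> 0"
  shows "snr_r \<eta> Pt \<sigma>2 \<alpha> h x y \<le> \<gamma>thr \<longleftrightarrow> \<eta> * Pt / (\<gamma>thr * \<sigma>2) * exp (- \<alpha> * x) - h\<^sup>2 \<le> y\<^sup>2"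
proof -
  have "0 < \<sigma>2 * (y\<^sup>2 + h\<^sup>2)" using assms by (simp add: add_nonneg_pos)
  then have "snr_r \<eta> Pt \<sigma>2 \<alpha> h x y \<le> \<gamma>thr \<longleftrightarrow> \<eta> * Pt * exp (- \<alpha> * x) \<le> \<gamma>thr * (\<sigma>2 * (y\<^sup>2 + h\<^sup>2))"
    by (simp add: snr_r_def divide_le_eq)
  also have "\<dots> \<longleftrightarrow> \<eta> * Pt / (\<gamma>thr * \<sigma>2) * exp (- \<alpha> * x) \<le> y\<^sup>2 + h\<^sup>2"
    using assms by (simp add: field_simps)
  finally show ?thesis by linarith
qed

lemma P_out_eq_integral:
  fixes \<eta> Pt \<sigma>2 \<gamma>thr \<alpha> h Dx Dy C I :: real
  assumes "\<sigma>2 > 0" "\<gamma>thr > 0" "h \<noteq> 0" "Dx > 0" "Dy > 0"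
    and C_def: "C = \<eta> * Pt / (\<gamma>thr * \<sigma>2)"
    and I: "(coverage_halfwidth \<alpha> h C (Dy / 2) has_integral I) {0..Dx}"
  shows "P_out \<eta> Pt \<sigma>2 \<gamma>thr \<alpha> h Dx Dy = 1 - 2 * I / (Dx * Dy)"
proof -
  define a where "a = Dy / 2"
  define w where "w = coverage_halfwidth \<alpha> h C a"
  define M1 where "M1 = uniform_measure lborel {0..Dx}"
  define M2 where "M2 = uniform_measure lborel {-a..a}"
  define S where "S = {(x, y). snr_r \<eta> Pt \<sigma>2 \<alpha> h x y \<le> \<gamma>thr}"
  have a: "0 < a" using assms by (simp add: a_def)
  have w: "0 \<le> w x" "w x \<le> a" for x
    using clamped_sqrt_bounds[of a] a by (simp_all add: w_def coverage_halfwidth_def)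
  have nonneg: "0 \<le> Dx - I / a"
  proof -
    have "I \<le> Dx * a"
      using has_integral_le[OF I has_integral_const_real[of a 0 Dx]] w assms by (simp add: w_def a_def)
    then show ?thesis using a by (simp add: field_simps)
  qed
  interpret M2: prob_space M2
    unfolding M2_def using a by (intro prob_space_uniform_measure) auto
  have P: "P_out \<eta> Pt \<sigma>2 \<gamma>thr \<alpha> h Dx Dy = measure (M1 \<Otimes>\<^sub>M M2) S"
    by (simp add: P_out_def user_law_def M1_def M2_def S_def a_def)
  have "S = {p \<in> space (M1 \<Otimes>\<^sub>M M2). snr_r \<eta> Pt \<sigma>2 \<alpha> h (fst p) (snd p) \<le> \<gamma>thr}"
    by (auto simp: S_def M1_def M2_def space_pair_measure)
  also have "\<dots> \<in> sets (M1 \<Otimes>\<^sub>M M2)"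
    unfolding M1_def M2_def snr_r_def by measurable
  finally have "S \<in> sets (M1 \<Otimes>\<^sub>M M2)" .
  then have "emeasure (M1 \<Otimes>\<^sub>M M2) S = (\<integral>\<^sup>+x. emeasure M2 (Pair x -` S) \<partial>M1)"
    by (rule M2.emeasure_pair_measure_alt)
  also have "\<dots> = (\<integral>\<^sup>+x. ennreal (1 - w x / a) \<partial>M1)"
  proof -
    have "Pair x -` S = {y. C * exp (- \<alpha> * x) - h\<^sup>2 \<le> y\<^sup>2}" for x
      using assms by (auto simp: S_def snr_r_le_iff)
    then show ?thesis
      by (simp add: M2_def w_def coverage_halfwidth_def emeasure_uniform_interval_square_ge[OF a])
  qed
  also have "\<dots> = (\<integral>\<^sup>+x. ennreal (1 - w x / a) * indicator {0..Dx} x \<partial>lborel) / emeasure lborel {0..Dx}"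
    unfolding M1_def by (rule nn_integral_uniform_measure) (auto simp: w_def coverage_halfwidth_def clamped_sqrt_def)
  also have "\<dots> = ennreal (Dx - I / a) / ennreal Dx"
  proof -
    have "((\<lambda>x. 1 - w x / a) has_integral Dx - I / a) {0..Dx}"
      using has_integral_diff[OF has_integral_const_real[of 1 0 Dx] has_integral_divide[OF I, of a]] assms
      by (simp add: w_def a_def)
    from nn_integral_has_integral_lebesgue'[OF _ this] show ?thesis
      using w a assms by (simp add: field_simps)
  qed
  also have "\<dots> = ennreal ((Dx - I / a) / Dx)"
    using nonneg assms by (intro divide_ennreal) auto
  finally have "measure (M1 \<Otimes>\<^sub>M M2) S = (Dx - I / a) / Dx"
    using nonneg assms by (simp add: measure_def)
  with P show ?thesis
    using assms by (simp add: a_def field_simps)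
qed

theorem proposition1:
  fixes \<eta> Pt \<sigma>2 \<gamma>thr \<alpha> h Dx Dy C :: real
  assumes "\<eta> > 0" "Pt > 0" "\<sigma>2 > 0" "\<gamma>thr > 0"
    and "\<alpha> > 0" "h > 0" "Dx > 0" "Dy > 0"
    and C_def: "C = \<eta> * Pt / (\<gamma>thr * \<sigma>2)"
  defines "P \<equiv> P_out \<eta> Pt \<sigma>2 \<gamma>thr \<alpha> h Dx Dy"
  shows
    "(h\<^sup>2 \<ge> C \<longrightarrow> P = 1) \<and>
     (h\<^sup>2 \<le> C \<and> h\<^sup>2 \<ge> C - Dy\<^sup>2 / 4 \<and> h\<^sup>2 \<ge> C * exp (- \<alpha> * Dx) \<longrightarrow>
        P = 1 + 4 / (\<alpha> * Dx * Dy) * (h * arctan (sqrt (C - h\<^sup>2) / h) - sqrt (C - h\<^sup>2))) \<and>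
     (h\<^sup>2 \<le> C - Dy\<^sup>2 / 4 \<and> h\<^sup>2 \<ge> C * exp (- \<alpha> * Dx) \<longrightarrow>
        P = 1 + (ln (h\<^sup>2 / C + Dy\<^sup>2 / (4 * C)) - 2) / (\<alpha> * Dx)
              + 4 * h * arctan (Dy / (2 * h)) / (\<alpha> * Dx * Dy)) \<and>
     (h\<^sup>2 \<ge> C - Dy\<^sup>2 / 4 \<and> h\<^sup>2 \<le> C * exp (- \<alpha> * Dx) \<longrightarrow>
        P = 1 + 4 / (\<alpha> * Dx * Dy) *
              (sqrt (C * exp (- \<alpha> * Dx) - h\<^sup>2)
               - h * arctan (sqrt (C * exp (- \<alpha> * Dx) - h\<^sup>2) / h)
               - sqrt (C - h\<^sup>2) + h * arctan (sqrt (C - h\<^sup>2) / h))) \<and>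
     (h\<^sup>2 \<le> C - Dy\<^sup>2 / 4 \<and> h\<^sup>2 \<le> C * exp (- \<alpha> * Dx) \<and>
      h\<^sup>2 \<ge> C * exp (- \<alpha> * Dx) - Dy\<^sup>2 / 4 \<longrightarrow>
        P = 1 + 4 / (\<alpha> * Dx * Dy) *
              (sqrt (C * exp (- \<alpha> * Dx) - h\<^sup>2)
               - h * arctan (sqrt (C * exp (- \<alpha> * Dx) - h\<^sup>2) / h)
               - Dy / 2 + h * arctan (Dy / (2 * h)))
            + ln (h\<^sup>2 / C + Dy\<^sup>2 / (4 * C)) / (\<alpha> * Dx)) \<and>
     (h\<^sup>2 \<le> C * exp (- \<alpha> * Dx) - Dy\<^sup>2 / 4 \<longrightarrow> P = 0)"
proof -
  note pos = assms(1-8)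
  have C: "0 < C" and a: "0 < Dy / 2" using pos by (simp_all add: C_def)
  define M where "M = coverage_primitive \<alpha> h C (Dy / 2)"
  note full = coverage_primitive_full[OF pos(5,6) C a, folded M_def]
   and partial = coverage_primitive_partial[OF pos(5,6) C a, folded M_def]
   and none = coverage_primitive_none[OF pos(5,6) C a, folded M_def]
  have P: "P = 1 - 2 * (M Dx - M 0) / (Dx * Dy)"
    unfolding P_def M_def using pos
    by (intro P_out_eq_integral[OF _ _ _ _ _ C_def] has_integral_coverage_halfwidth C) simp_all
  have ln: "ln (h\<^sup>2 / C + Dy\<^sup>2 / (4 * C)) = - ln (C / ((Dy / 2)\<^sup>2 + h\<^sup>2))"
    using C pos by (simp add: ln_div power_divide add_pos_pos field_simps)
  have E: "C * exp (- \<alpha> * Dx) < C" using C pos by simp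
  \<comment> \<open>In each case the hypotheses decide the regime of both endpoints 0 and Dx.\<close>
  show ?thesis
    unfolding P ln using E pos
    by (intro conjI impI; simp add: full partial none power_divide; simp add: field_simps)
qed

end
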